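(* Let $A$ be a finite alphabet and $k\ge 1$. Let $x,y\in A^*$ be $k$-binomially equivalent. Then for all words $p,q,r\in A^*$, the words $pxqyr$ and $pyqxr$ are $(k+1)$-binomially equivalent.
   Context: For words $w,z\in A^*$, $\binom{w}{z}$ denotes the number of occurrences of $z$ as a (scattered) subword of $w$, i.e. the number of strictly increasing maps $\varphi:\{1,\ldots,|z|\}\to\{1,\ldots,|w|\}$ with $w_{\varphi(1)}\cdots w_{\varphi(|z|)}=z$ (with $\binom{w}{\varepsilon}=1$). Two words $u,v$ are $m$-binomially equivalent if $\binom{u}{z}=\binom{v}{z}$ for all words $z$ of length at most $m$. *)

theory Defs
  imports Main
begin

text \<open>Number of occurrences of z as a scattered subword of w: the number of
  index sets I of size |z| (equivalently strictly increasing maps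
  {1..|z|} -> {1..|w|}) such that the letters of w at I, in increasing order, spell z.\<close>
definition subword_count :: "'a list \<Rightarrow> 'a list \<Rightarrow> nat" where
  "subword_count w z =
     card {I. I \<subseteq> {0..<length w} \<and> card I = length z \<and> nths w I = z}"

definition binom_equiv :: "nat \<Rightarrow> 'a list \<Rightarrow> 'a list \<Rightarrow> bool" where
  "binom_equiv m u v \<longleftrightarrow> (\<forall>z. length z \<le> m \<longrightarrow> subword_count u z = subword_count v z)"

end

theory Submission
  imports Defs
begin

text \<open>Counting occurrences by where their first letter lies gives a Pascal-type recursion,
  and hence the convolution formula
  \<open>subword_count (u @ v) z = (\<Sum>i\<le>|z|. subword_count u (take i z) * subword_count v (drop i z))\<close>.
  Expand both \<open>x @ q @ y\<close> and \<open>y @ q @ x\<close> this way for \<open>|z| \<le> k + 1\<close>: every term that splits \<open>z\<close>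
  into two nonempty parts involves only subwords of length at most \<open>k\<close> and agrees on both
  sides, and the two remaining terms balance because expanding \<open>q @ y\<close> and \<open>q @ x\<close> once more
  shows that \<open>subword_count (q @ y) z - subword_count y z = subword_count (q @ x) z - subword_count x z\<close>.
  Appending the common context \<open>p\<close>, \<open>r\<close> preserves the equivalence by the same formula.\<close>

definition subword_positions :: "'a list \<Rightarrow> 'a list \<Rightarrow> nat set set" where
  "subword_positions w z = {I. I \<subseteq> {..<length w} \<and> nths w I = z}"

lemma card_eq_length_nths:
  assumes "I \<subseteq> {..<length w}"
  shows "card I = length (nths w I)"
proof -
  have "{i. i < length w \<and> i \<in> I} = I" using assms by auto
  then show ?thesis by (simp add: length_nths)
qed

lemma subword_count_eq_card_positions: "subword_count w z = card (subword_positions w z)"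
proof -
  have "{I. I \<subseteq> {0..<length w} \<and> card I = length z \<and> nths w I = z} = subword_positions w z"
    using card_eq_length_nths by (auto simp: subword_positions_def atLeast0LessThan)
  then show ?thesis by (simp add: subword_count_def)
qed

lemma finite_subword_positions: "finite (subword_positions w z)"
  by (rule finite_subset[of _ "Pow {..<length w}"]) (auto simp: subword_positions_def)

lemma subword_count_Nil_right [simp]: "subword_count w [] = 1"
proof -
  have "I = {}" if "I \<subseteq> {..<length w}" "nths w I = []" for I
    using card_eq_length_nths[OF that(1)] that finite_subset[OF that(1)] by auto
  then have "subword_positions w [] = {{}}" by (auto simp: subword_positions_def)
  then show ?thesis by (simp add: subword_count_eq_card_positions)
qed

lemma subword_count_Nil_Cons [simp]: "subword_count [] (a # z) = 0"
  by (auto simp: subword_count_eq_card_positions subword_positions_def)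

lemma nths_Cons_image_Suc: "nths (c # w) (Suc ` J) = nths w J"
  by (simp add: nths_Cons image_iff)

lemma nths_Cons_insert_0: "nths (c # w) (insert 0 (Suc ` J)) = c # nths w J"
proof -
  have "{j. Suc j \<in> insert 0 (Suc ` J)} = J" by auto
  then show ?thesis by (simp add: nths_Cons)
qed

lemma subword_positions_Cons_without_0:
  "bij_betw ((`) Suc) (subword_positions w z) {I \<in> subword_positions (c # w) z. 0 \<notin> I}"
proof (rule bij_betw_byWitness[where f' = "\<lambda>I. {j. Suc j \<in> I}"])
  show "\<forall>I\<in>{I \<in> subword_positions (c # w) z. 0 \<notin> I}. Suc ` {j. Suc j \<in> I} = I"
    by (auto simp: image_iff) (metis not0_implies_Suc)
  show "(\<lambda>I. {j. Suc j \<in> I}) ` {I \<in> subword_positions (c # w) z. 0 \<notin> I} \<subseteq> subword_positions w z"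
    by (auto simp: subword_positions_def nths_Cons)
qed (auto simp: subword_positions_def nths_Cons_image_Suc)

lemma subword_positions_Cons_with_0:
  "bij_betw (\<lambda>J. insert 0 (Suc ` J)) (subword_positions w z)
     {I \<in> subword_positions (c # w) (c # z). 0 \<in> I}"
proof (rule bij_betw_byWitness[where f' = "\<lambda>I. {j. Suc j \<in> I}"])
  show "\<forall>I\<in>{I \<in> subword_positions (c # w) (c # z). 0 \<in> I}. insert 0 (Suc ` {j. Suc j \<in> I}) = I"
    by (auto simp: image_iff) (metis not0_implies_Suc)
  show "(\<lambda>I. {j. Suc j \<in> I}) ` {I \<in> subword_positions (c # w) (c # z). 0 \<in> I} \<subseteq> subword_positions w z"
    by (auto simp: subword_positions_def nths_Cons)
qed (auto simp: subword_positions_def nths_Cons_insert_0)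

lemma subword_count_Cons_Cons:
  "subword_count (c # w) (a # z) = subword_count w (a # z) + (if a = c then subword_count w z else 0)"
proof -
  let ?P = "subword_positions (c # w) (a # z)"
  have "?P = {I \<in> ?P. 0 \<notin> I} \<union> {I \<in> ?P. 0 \<in> I}" by blast
  then have split: "card ?P = card {I \<in> ?P. 0 \<notin> I} + card {I \<in> ?P. 0 \<in> I}"
    by (metis (no_types, lifting) card_Un_disjoint disjoint_iff finite_Un finite_subword_positions mem_Collect_eq)
  have "card {I \<in> ?P. 0 \<notin> I} = subword_count w (a # z)"
    by (metis bij_betw_same_card subword_positions_Cons_without_0 subword_count_eq_card_positions)
  moreover have "card {I \<in> ?P. 0 \<in> I} = (if a = c then subword_count w z else 0)"
  proof (cases "a = c")
    case True
    then show ?thesis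
      by (metis bij_betw_same_card subword_positions_Cons_with_0 subword_count_eq_card_positions)
  next
    case False
    then have "{I \<in> ?P. 0 \<in> I} = {}"
      by (auto simp: subword_positions_def nths_Cons)
    then show ?thesis using False by (metis card.empty)
  qed
  ultimately show ?thesis using split by (simp add: subword_count_eq_card_positions)
qed

lemma subword_count_append:
  "subword_count (u @ v) z = (\<Sum>i\<le>length z. subword_count u (take i z) * subword_count v (drop i z))"
proof (induction u arbitrary: z)
  case Nil
  show ?case
    by (cases z) (simp_all add: sum.atMost_Suc_shift del: sum.atMost_Suc)
next
  case (Cons c u)
  show ?case
  proof (cases z)
    case Nil
    then show ?thesis by simp
  next
    case (Cons a zs)
    let ?S = "\<lambda>u z. \<Sum>i\<le>length z. subword_count u (take i z) * subword_count v (drop i z)"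
    have "subword_count (c # u @ v) (a # zs) = ?S u (a # zs) + (if a = c then ?S u zs else 0)"
      by (simp add: subword_count_Cons_Cons Cons.IH)
    also have "\<dots> = ?S (c # u) (a # zs)"
      by (simp add: sum.atMost_Suc_shift subword_count_Cons_Cons sum.distrib algebra_simps
          del: sum.atMost_Suc)
    finally show ?thesis using Cons by simp
  qed
qed

lemma sum_atMost_split_first: "(\<Sum>i\<le>n. f i) = f 0 + (\<Sum>i\<in>{0<..n}. f i)"
  for f :: "nat \<Rightarrow> 'b::comm_monoid_add"
proof -
  have "{..n} = insert 0 {0<..n}" by auto
  then show ?thesis by simp
qed

lemma sum_atMost_split_ends:
  fixes f :: "nat \<Rightarrow> 'b::comm_monoid_add"
  assumes "0 < n"
  shows "(\<Sum>i\<le>n. f i) = f 0 + f n + (\<Sum>i\<in>{0<..<n}. f i)"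
proof -
  have "{..n} = insert 0 (insert n {0<..<n})" using assms by auto
  then show ?thesis using assms by (simp add: ac_simps)
qed

lemma binom_equiv_refl: "binom_equiv m x x"
  by (simp add: binom_equiv_def)

lemma binom_equiv_sym: "binom_equiv m x y \<Longrightarrow> binom_equiv m y x"
  by (simp add: binom_equiv_def)

lemma binom_equiv_append:
  assumes "binom_equiv m x x'" and "binom_equiv m y y'"
  shows "binom_equiv m (x @ y) (x' @ y')"
  using assms by (auto simp: binom_equiv_def subword_count_append intro!: sum.cong)

lemma subword_count_append_balanced:
  assumes "binom_equiv k x y" and "length z \<le> Suc k"
  shows "subword_count (u @ x) z + subword_count y z = subword_count (u @ y) z + subword_count x z"
proof -
  let ?S = "\<lambda>x. \<Sum>i\<in>{0<..length z}. subword_count u (take i z) * subword_count x (drop i z)"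
  have "?S x = ?S y"
    using assms by (intro sum.cong) (auto simp: binom_equiv_def)
  then show ?thesis
    by (simp add: subword_count_append sum_atMost_split_first[where n = "length z"])
qed

lemma binom_equiv_swap:
  assumes xy: "binom_equiv k x y"
  shows "binom_equiv (Suc k) (x @ q @ y) (y @ q @ x)"
  unfolding binom_equiv_def
proof (intro allI impI)
  fix z :: "'a list"
  assume z: "length z \<le> Suc k"
  show "subword_count (x @ q @ y) z = subword_count (y @ q @ x) z"
  proof (cases "z = []")
    case False
    let ?S = "\<lambda>x v. \<Sum>i\<in>{0<..<length z}. subword_count x (take i z) * subword_count v (drop i z)"
    have "binom_equiv k (q @ y) (q @ x)"
      using binom_equiv_append[OF binom_equiv_refl binom_equiv_sym[OF xy]] .
    then have "?S x (q @ y) = ?S y (q @ x)"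
      using xy z by (intro sum.cong) (auto simp: binom_equiv_def)
    moreover have "subword_count (q @ y) z + subword_count x z = subword_count (q @ x) z + subword_count y z"
      using subword_count_append_balanced[OF xy z] by simp
    ultimately show ?thesis
      using False by (simp add: subword_count_append sum_atMost_split_ends[where n = "length z"])
  qed simp
qed

theorem mainTheorem3:
  fixes x y p q r :: "'a::finite list" and k :: nat
  assumes "k \<ge> 1"
    and "binom_equiv k x y"
  shows "binom_equiv (k + 1) (p @ x @ q @ y @ r) (p @ y @ q @ x @ r)"
proof -
  have "binom_equiv (Suc k) (x @ q @ y) (y @ q @ x)"
    using binom_equiv_swap[OF assms(2)] .
  then have "binom_equiv (Suc k) (p @ (x @ q @ y) @ r) (p @ (y @ q @ x) @ r)"
    by (rule binom_equiv_append[OF binom_equiv_refl binom_equiv_append[OF _ binom_equiv_refl]])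
  then show ?thesis by simp
qed

end
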